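(* Let $k\ge2$ and let $L_{01}\in\mathbb{R}^{k\times k}$ be the 0-1 loss, $L_{01}(i,j)=[i\ne j]$, with quadratic surrogate $\Phi_{quad}(f,y)=\frac1{2k}\|f+L_{01}(:,y)\|_2^2$. Then $$H_{\Phi_{quad},L_{01},\mathbb{R}^k}(\varepsilon)=\frac{\varepsilon^2}{4k},\qquad0\le\varepsilon\le1.$$
   Context: $[A]=1$ if $A$ is true and $0$ otherwise. $\mathrm{pred}(f)$ is the smallest index maximizing $f_c$. For $q\in\Delta_k$: $\ell(f,q)=\sum_cq_cL(\mathrm{pred}(f),c)$, $\phi(f,q)=\sum_cq_c\Phi(f,c)$, $\delta\ell(f,q)=\ell(f,q)-\inf_{\hat f\in\mathcal{F}}\ell(\hat f,q)$, $\delta\phi(f,q)=\phi(f,q)-\inf_{\hat f\in\mathcal{F}}\phi(\hat f,q)$; calibration function $H_{\Phi,L,\mathcal{F}}(\varepsilon)=\inf\{\delta\phi(f,q):f\in\mathcal{F},q\in\Delta_k,\delta\ell(f,q)\ge\varepsilon\}$ ($+\infty$ if empty); here $\mathcal{F}=\mathbb{R}^k$. *)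

theory Defs
  imports Complex_Main "HOL-Library.Extended_Real"
begin

(* Classes are indexed 0..k-1 (i.e. {..<k}); score vectors f in R^k and
   distributions q in Delta_k are functions nat => real that vanish outside {..<k}. *)

definition score_space :: "nat \<Rightarrow> (nat \<Rightarrow> real) set" where
  "score_space k = {f. \<forall>i\<ge>k. f i = 0}"

definition simplex :: "nat \<Rightarrow> (nat \<Rightarrow> real) set" where
  "simplex k = {q. (\<forall>c<k. 0 \<le> q c) \<and> (\<Sum>c<k. q c) = 1 \<and> (\<forall>c\<ge>k. q c = 0)}"

definition pred :: "nat \<Rightarrow> (nat \<Rightarrow> real) \<Rightarrow> nat" where
  "pred k f = (LEAST c. c < k \<and> (\<forall>c'<k. f c' \<le> f c))"

definition ell :: "nat \<Rightarrow> (nat \<Rightarrow> nat \<Rightarrow> real) \<Rightarrow> (nat \<Rightarrow> real) \<Rightarrow> (nat \<Rightarrow> real) \<Rightarrow> real" where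
  "ell k L f q = (\<Sum>c<k. q c * L (pred k f) c)"

definition phi :: "nat \<Rightarrow> ((nat \<Rightarrow> real) \<Rightarrow> nat \<Rightarrow> real) \<Rightarrow> (nat \<Rightarrow> real) \<Rightarrow> (nat \<Rightarrow> real) \<Rightarrow> real" where
  "phi k Phi f q = (\<Sum>c<k. q c * Phi f c)"

definition delta_ell :: "nat \<Rightarrow> (nat \<Rightarrow> nat \<Rightarrow> real) \<Rightarrow> (nat \<Rightarrow> real) \<Rightarrow> (nat \<Rightarrow> real) \<Rightarrow> real" where
  "delta_ell k L f q = ell k L f q - (INF g\<in>score_space k. ell k L g q)"

definition delta_phi :: "nat \<Rightarrow> ((nat \<Rightarrow> real) \<Rightarrow> nat \<Rightarrow> real) \<Rightarrow> (nat \<Rightarrow> real) \<Rightarrow> (nat \<Rightarrow> real) \<Rightarrow> real" where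
  "delta_phi k Phi f q = phi k Phi f q - (INF g\<in>score_space k. phi k Phi g q)"

(* calibration function with F = R^k; value +infinity if the set is empty *)
definition calib :: "nat \<Rightarrow> ((nat \<Rightarrow> real) \<Rightarrow> nat \<Rightarrow> real) \<Rightarrow> (nat \<Rightarrow> nat \<Rightarrow> real) \<Rightarrow> real \<Rightarrow> ereal" where
  "calib k Phi L \<epsilon> = Inf {ereal (delta_phi k Phi f q) | f q.
      f \<in> score_space k \<and> q \<in> simplex k \<and> delta_ell k L f q \<ge> \<epsilon>}"

definition L01 :: "nat \<Rightarrow> nat \<Rightarrow> real" where
  "L01 i j = (if i \<noteq> j then 1 else 0)"

definition Phi_quad :: "nat \<Rightarrow> (nat \<Rightarrow> real) \<Rightarrow> nat \<Rightarrow> real" where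
  "Phi_quad k f y = 1 / (2 * real k) * (\<Sum>c<k. (f c + L01 c y)^2)"

end

theory Submission
  imports Defs
begin

text \<open>
  Completing the square gives \<open>\<delta>\<phi>(f, q) = \<parallel>f + 1 - q\<parallel>\<^sup>2 / (2k)\<close>, minimised at \<open>f = q - 1\<close>,
  while \<open>\<delta>\<ell>(f, q) = q\<^sub>m - q\<^sub>p\<close> for \<open>m = pred q\<close> and \<open>p = pred f\<close>.  Since \<open>f\<^sub>m \<le> f\<^sub>p\<close>,
  the coordinates \<open>p\<close> and \<open>m\<close> of \<open>f + 1 - q\<close> differ by at least \<open>\<delta>\<ell>(f, q)\<close>, so their squares
  sum to at least \<open>\<delta>\<ell>(f, q)\<^sup>2 / 2\<close>.  Equality is attained by splitting the mass of \<open>q\<close> as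
  \<open>(1 - \<epsilon>)/2, (1 + \<epsilon>)/2\<close> on two classes and putting \<open>f\<close> at the midpoint \<open>-1/2\<close> there.
\<close>

lemma pred_spec:
  assumes "0 < k"
  shows "pred k f < k \<and> (\<forall>c<k. f c \<le> f (pred k f))"
proof -
  have "Max (f ` {..<k}) \<in> f ` {..<k}"
    using assms by (intro Max_in) auto
  then obtain m where "m < k" "f m = Max (f ` {..<k})"
    by auto
  then have "\<exists>c. c < k \<and> (\<forall>c'<k. f c' \<le> f c)"
    by auto
  then show ?thesis
    unfolding pred_def by (rule LeastI_ex)
qed

lemma pred_less: "0 < k \<Longrightarrow> pred k f < k"
  using pred_spec by blast

lemma le_pred: "0 < k \<Longrightarrow> c < k \<Longrightarrow> f c \<le> f (pred k f)"
  using pred_spec by blast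

lemma simplex_sum: "q \<in> simplex k \<Longrightarrow> (\<Sum>c<k. q c) = 1"
  by (simp add: simplex_def)

lemma simplex_subset_score_space: "simplex k \<subseteq> score_space k"
  by (auto simp: simplex_def score_space_def)

lemma ell_L01:
  assumes "0 < k"
  shows "ell k L01 f q = (\<Sum>c<k. q c) - q (pred k f)"
proof -
  have "ell k L01 f q = (\<Sum>c<k. q c - (if c = pred k f then q c else 0))"
    unfolding ell_def L01_def by (rule sum.cong) auto
  also have "\<dots> = (\<Sum>c<k. q c) - q (pred k f)"
    using pred_less[OF assms] by (simp add: sum_subtractf)
  finally show ?thesis .
qed

lemma delta_ell_L01:
  assumes "q \<in> simplex k" "0 < k"
  shows "delta_ell k L01 f q = q (pred k q) - q (pred k f)"
proof -
  have ell: "ell k L01 g q = 1 - q (pred k g)" for g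
    using ell_L01[OF assms(2)] simplex_sum[OF assms(1)] by simp
  have "(INF g\<in>score_space k. ell k L01 g q) = 1 - q (pred k q)"
  proof (rule cInf_eq_minimum)
    show "1 - q (pred k q) \<in> (\<lambda>g. ell k L01 g q) ` score_space k"
      using assms(1) simplex_subset_score_space by (auto simp: ell)
    show "1 - q (pred k q) \<le> x" if "x \<in> (\<lambda>g. ell k L01 g q) ` score_space k" for x
      using that pred_less[OF assms(2)] le_pred[OF assms(2), of _ q] by (auto simp: ell)
  qed
  then show ?thesis
    unfolding delta_ell_def ell by simp
qed

lemma sum_square_plus_L01:
  assumes "y < k"
  shows "(\<Sum>c<k. (f c + L01 c y)\<^sup>2) = (\<Sum>c<k. (f c + 1)\<^sup>2) - 2 * (f y + 1) + 1"
proof -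
  have "(\<Sum>c<k. (f c + L01 c y)\<^sup>2)
      = (\<Sum>c<k. (f c + 1)\<^sup>2 - (if c = y then 2 * (f c + 1) - 1 else 0))"
    by (rule sum.cong) (auto simp: L01_def power2_eq_square algebra_simps)
  then show ?thesis
    using assms by (simp add: sum_subtractf)
qed

lemma phi_quad_complete_square:
  assumes "q \<in> simplex k"
  shows "phi k (Phi_quad k) f q
    = ((\<Sum>c<k. (f c + 1 - q c)\<^sup>2) + 1 - (\<Sum>c<k. (q c)\<^sup>2)) / (2 * real k)"
proof -
  let ?A = "\<Sum>c<k. (f c + 1)\<^sup>2"
  have "phi k (Phi_quad k) f q = (\<Sum>y<k. q y * (?A - 2 * (f y + 1) + 1)) / (2 * real k)"
    unfolding phi_def Phi_quad_def
    by (simp add: sum_square_plus_L01 sum_divide_distrib)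
  also have "(\<Sum>y<k. q y * (?A - 2 * (f y + 1) + 1))
      = ?A * (\<Sum>y<k. q y) - 2 * (\<Sum>y<k. q y * (f y + 1)) + (\<Sum>y<k. q y)"
  proof -
    have "(\<Sum>y<k. q y * (?A - 2 * (f y + 1) + 1))
        = (\<Sum>y<k. ?A * q y - 2 * (q y * (f y + 1)) + q y)"
      by (rule sum.cong) (simp_all add: algebra_simps)
    then show ?thesis
      by (simp only: sum.distrib sum_subtractf sum_distrib_left)
  qed
  also have "\<dots> = (\<Sum>c<k. (f c + 1 - q c)\<^sup>2) + 1 - (\<Sum>c<k. (q c)\<^sup>2)"
    using simplex_sum[OF assms]
    by (simp add: power2_diff sum.distrib sum_subtractf sum_distrib_left
        sum_distrib_right[symmetric] algebra_simps)
  finally show ?thesis .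
qed

lemma delta_phi_quad:
  assumes "q \<in> simplex k" "0 < k"
  shows "delta_phi k (Phi_quad k) f q = (\<Sum>c<k. (f c + 1 - q c)\<^sup>2) / (2 * real k)"
proof -
  let ?v = "(1 - (\<Sum>c<k. (q c)\<^sup>2)) / (2 * real k)"
  note phi = phi_quad_complete_square[OF assms(1)]
  have "(INF g\<in>score_space k. phi k (Phi_quad k) g q) = ?v"
  proof (rule cInf_eq_minimum)
    define g where "g c = (if c < k then q c - 1 else 0)" for c
    have "g \<in> score_space k" "(\<Sum>c<k. (g c + 1 - q c)\<^sup>2) = 0"
      by (auto simp: score_space_def g_def)
    then show "?v \<in> (\<lambda>g. phi k (Phi_quad k) g q) ` score_space k"
      by (force simp: phi)
    show "?v \<le> x" if "x \<in> (\<lambda>g. phi k (Phi_quad k) g q) ` score_space k" for x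
      using that assms(2)
      by (auto simp: phi divide_right_mono sum_nonneg)
  qed
  then show ?thesis
    unfolding delta_phi_def phi using assms(2) by (simp add: field_simps)
qed

lemma square_diff_le: "(a - b)\<^sup>2 \<le> 2 * (a\<^sup>2 + b\<^sup>2)" for a b :: real
proof -
  have "(a - b)\<^sup>2 + (a + b)\<^sup>2 = 2 * (a\<^sup>2 + b\<^sup>2)"
    by (simp add: power2_eq_square algebra_simps)
  then show ?thesis
    by (smt (verit) zero_le_power2)
qed

lemma delta_phi_quad_lower_bound:
  assumes f: "f \<in> score_space k" and q: "q \<in> simplex k" and k: "0 < k"
    and "0 \<le> \<epsilon>" and "\<epsilon> \<le> delta_ell k L01 f q"
  shows "\<epsilon>\<^sup>2 / (4 * real k) \<le> delta_phi k (Phi_quad k) f q"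
proof -
  define p m where "p = pred k f" and "m = pred k q"
  define h where "h c = (f c + 1 - q c)\<^sup>2" for c
  have eps: "\<epsilon> \<le> q m - q p"
    using assms(5) delta_ell_L01[OF q k] by (simp add: p_def m_def)
  have "\<epsilon>\<^sup>2 / 2 \<le> sum h {..<k}"
  proof (cases "p = m")
    case True
    then show ?thesis
      using eps \<open>0 \<le> \<epsilon>\<close> by (simp add: h_def sum_nonneg)
  next
    case False
    have "f m \<le> f p"
      unfolding p_def m_def using le_pred[OF k] pred_less[OF k] by blast
    then have "\<epsilon> \<le> (f p + 1 - q p) - (f m + 1 - q m)"
      using eps by simp
    then have "\<epsilon>\<^sup>2 \<le> ((f p + 1 - q p) - (f m + 1 - q m))\<^sup>2"
      using \<open>0 \<le> \<epsilon>\<close> by (intro power_mono) auto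
    also have "\<dots> \<le> 2 * (h p + h m)"
      unfolding h_def by (rule square_diff_le)
    also have "h p + h m = sum h {p, m}"
      using False by simp
    also have "\<dots> \<le> sum h {..<k}"
      using pred_less[OF k] by (intro sum_mono2) (auto simp: p_def m_def h_def)
    finally show ?thesis
      by simp
  qed
  then show ?thesis
    using k by (simp add: delta_phi_quad[OF q k] h_def field_simps)
qed

lemma delta_phi_quad_lower_bound_attained:
  assumes k: "2 \<le> k" and "0 \<le> \<epsilon>" "\<epsilon> \<le> 1"
  obtains f q where "f \<in> score_space k" "q \<in> simplex k" "\<epsilon> \<le> delta_ell k L01 f q"
    "delta_phi k (Phi_quad k) f q = \<epsilon>\<^sup>2 / (4 * real k)"
proof -
  define f :: "nat \<Rightarrow> real" where "f c = (if c < 2 then -1/2 else if c < k then -1 else 0)" for c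
  define q :: "nat \<Rightarrow> real"
    where "q c = (if c = 0 then (1 - \<epsilon>) / 2 else if c = 1 then (1 + \<epsilon>) / 2 else 0)" for c
  have k0: "0 < k" and two: "{0, 1} \<subseteq> {..<k}"
    using k by auto
  have "f \<in> score_space k"
    using k by (auto simp: score_space_def f_def)
  have "(\<Sum>c<k. q c) = (\<Sum>c\<in>{0, 1}. q c)"
    using two by (intro sum.mono_neutral_right) (auto simp: q_def)
  also have "\<dots> = 1"
    by (simp add: q_def field_simps)
  finally have "q \<in> simplex k"
    using k assms(2,3) by (auto simp: simplex_def q_def)
  have "pred k f = 0"
    unfolding pred_def using k0 by (intro Least_equality) (auto simp: f_def)
  moreover have "q 1 \<le> q (pred k q)"
    using le_pred[OF k0, of 1 q] k by simp
  ultimately have "\<epsilon> \<le> delta_ell k L01 f q"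
    by (simp add: delta_ell_L01[OF \<open>q \<in> simplex k\<close> k0] q_def field_simps)
  have "(\<Sum>c<k. (f c + 1 - q c)\<^sup>2) = (\<Sum>c\<in>{0, 1}. (f c + 1 - q c)\<^sup>2)"
    using two by (intro sum.mono_neutral_right) (auto simp: q_def f_def)
  also have "\<dots> = \<epsilon>\<^sup>2 / 2"
    by (simp add: q_def f_def power2_eq_square field_simps)
  finally have "delta_phi k (Phi_quad k) f q = \<epsilon>\<^sup>2 / (4 * real k)"
    using k0 by (simp add: delta_phi_quad[OF \<open>q \<in> simplex k\<close> k0] field_simps)
  with that \<open>f \<in> score_space k\<close> \<open>q \<in> simplex k\<close> \<open>\<epsilon> \<le> delta_ell k L01 f q\<close> show ?thesis
    by blast
qed

theorem proposition12:
  fixes k :: nat and \<epsilon> :: real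
  assumes "k \<ge> 2" and "0 \<le> \<epsilon>" and "\<epsilon> \<le> 1"
  shows "calib k (Phi_quad k) L01 \<epsilon> = ereal (\<epsilon>^2 / (4 * real k))"
  unfolding calib_def
proof (rule cInf_eq_minimum)
  obtain f q where "f \<in> score_space k" "q \<in> simplex k" "\<epsilon> \<le> delta_ell k L01 f q"
    "delta_phi k (Phi_quad k) f q = \<epsilon>\<^sup>2 / (4 * real k)"
    using delta_phi_quad_lower_bound_attained assms .
  then show "ereal (\<epsilon>\<^sup>2 / (4 * real k)) \<in> {ereal (delta_phi k (Phi_quad k) f q) | f q.
      f \<in> score_space k \<and> q \<in> simplex k \<and> \<epsilon> \<le> delta_ell k L01 f q}"
    by force
  show "ereal (\<epsilon>\<^sup>2 / (4 * real k)) \<le> x" if "x \<in> {ereal (delta_phi k (Phi_quad k) f q) | f q.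
      f \<in> score_space k \<and> q \<in> simplex k \<and> \<epsilon> \<le> delta_ell k L01 f q}" for x
    using that delta_phi_quad_lower_bound assms by force
qed

end
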